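(* Let $(X,\|\cdot\|)$ be a normed linear space, let $I$ be a non-trivial admissible ideal in $\mathbb{N}$, let $x=\{x_k\}_{k\in\mathbb{N}}$ be a sequence in $X$ and let $r>0$. Then the set $I\text{-}st\text{-}\mathrm{LIM}_x^r$ is closed in $X$.
   Context: An ideal $I$ in $\mathbb{N}$ is a family of subsets of $\mathbb{N}$ containing $\emptyset$, closed under finite unions and under taking subsets; it is non-trivial if $\mathbb{N}\notin I$ and admissible if $\{n\}\in I$ for every $n$. For $r\ge0$, $x$ is $r$-$I$-statistically convergent to $\xi\in X$ if for every $\varepsilon>0$ and $\delta>0$, $\{n\in\mathbb{N}:\frac1n|\{k\le n:\|x_k-\xi\|\ge r+\varepsilon\}|\ge\delta\}\in I$; $I\text{-}st\text{-}\mathrm{LIM}_x^r$ is the set of all such $\xi$. *)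

theory Defs
  imports "HOL-Analysis.Analysis"
begin

definition is_ideal :: "nat set set \<Rightarrow> bool" where
  "is_ideal I \<longleftrightarrow> {} \<in> I \<and> (\<forall>A\<in>I. \<forall>B\<in>I. A \<union> B \<in> I) \<and> (\<forall>A\<in>I. \<forall>B. B \<subseteq> A \<longrightarrow> B \<in> I)"

definition nontrivial_ideal :: "nat set set \<Rightarrow> bool" where
  "nontrivial_ideal I \<longleftrightarrow> UNIV \<notin> I"

definition admissible_ideal :: "nat set set \<Rightarrow> bool" where
  "admissible_ideal I \<longleftrightarrow> (\<forall>n. {n} \<in> I)"

text \<open>r-I-statistical convergence: for every eps>0, delta>0,
  {n : (1/n) |{k \<le> n : norm (x k - xi) \<ge> r + eps}| \<ge> delta} \<in> I.
  Terms are indexed k = 1..n (the paper's N = {1,2,...}).\<close>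
definition r_I_stat_conv ::
  "nat set set \<Rightarrow> real \<Rightarrow> (nat \<Rightarrow> 'a::real_normed_vector) \<Rightarrow> 'a \<Rightarrow> bool" where
  "r_I_stat_conv I r x \<xi> \<longleftrightarrow>
     (\<forall>\<epsilon>>0. \<forall>\<delta>>0.
        {n. (1 / real n) * real (card {k \<in> {1..n}. norm (x k - \<xi>) \<ge> r + \<epsilon>}) \<ge> \<delta>} \<in> I)"

definition I_st_LIM ::
  "nat set set \<Rightarrow> real \<Rightarrow> (nat \<Rightarrow> 'a::real_normed_vector) \<Rightarrow> 'a set" where
  "I_st_LIM I r x = {\<xi>. r_I_stat_conv I r x \<xi>}"

end

theory Submission
  imports Defs
begin

text \<open>If \<open>\<xi>\<close> is a limit point of the set, pick a limit \<open>y\<close> with \<open>\<parallel>y - \<xi>\<parallel> < \<epsilon>/2\<close>.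
  By the triangle inequality every index with \<open>\<parallel>x k - \<xi>\<parallel> \<ge> r + \<epsilon>\<close> also satisfies
  \<open>\<parallel>x k - y\<parallel> \<ge> r + \<epsilon>/2\<close>, so the density sets for \<open>\<xi>\<close> are contained in those for \<open>y\<close>,
  which lie in \<open>I\<close>; as \<open>I\<close> is closed under subsets, \<open>\<xi>\<close> is a limit as well.\<close>

lemma exceptional_indices_shift:
  fixes x :: "nat \<Rightarrow> 'a::real_normed_vector"
  assumes "norm (y - \<xi>) \<le> d"
  shows "{k \<in> K. norm (x k - \<xi>) \<ge> t} \<subseteq> {k \<in> K. norm (x k - y) \<ge> t - d}"
proof safe
  fix k assume "t \<le> norm (x k - \<xi>)"
  moreover have "norm (x k - \<xi>) \<le> norm (x k - y) + norm (y - \<xi>)"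
    using norm_triangle_ineq[of "x k - y" "y - \<xi>"] by simp
  ultimately show "t - d \<le> norm (x k - y)" using assms by linarith
qed

lemma density_le_of_subset:
  assumes "A \<subseteq> B" and "finite B"
  shows "1 / real n * real (card A) \<le> 1 / real n * real (card B)"
  using card_mono[OF assms(2,1)] by (intro mult_left_mono) auto

lemma r_I_stat_conv_near:
  fixes x :: "nat \<Rightarrow> 'a::real_normed_vector"
  assumes down_closed: "\<forall>A\<in>I. \<forall>B. B \<subseteq> A \<longrightarrow> B \<in> I"
    and y: "r_I_stat_conv I r x y" and near: "norm (y - \<xi>) \<le> d" and "0 \<le> d"
    and \<epsilon>: "\<epsilon> > d" and \<delta>: "\<delta> > 0"
  shows "{n. (1 / real n) * real (card {k \<in> {1..n}. norm (x k - \<xi>) \<ge> r + \<epsilon>}) \<ge> \<delta>} \<in> I"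
proof (rule down_closed[rule_format])
  show "{n. \<delta> \<le> 1 / real n * real (card {k \<in> {1..n}. r + (\<epsilon> - d) \<le> norm (x k - y)})} \<in> I"
    using y \<epsilon> \<delta> unfolding r_I_stat_conv_def by simp
  have "{k \<in> {1..n}. r + \<epsilon> \<le> norm (x k - \<xi>)} \<subseteq> {k \<in> {1..n}. r + (\<epsilon> - d) \<le> norm (x k - y)}"
    for n using exceptional_indices_shift[OF near, where K = "{1..n}" and t = "r + \<epsilon>"] by (simp add: algebra_simps)
  then have "1 / real n * real (card {k \<in> {1..n}. r + \<epsilon> \<le> norm (x k - \<xi>)})
      \<le> 1 / real n * real (card {k \<in> {1..n}. r + (\<epsilon> - d) \<le> norm (x k - y)})" for n
    by (rule density_le_of_subset) simp
  then show "{n. \<delta> \<le> 1 / real n * real (card {k \<in> {1..n}. r + \<epsilon> \<le> norm (x k - \<xi>)})}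
      \<subseteq> {n. \<delta> \<le> 1 / real n * real (card {k \<in> {1..n}. r + (\<epsilon> - d) \<le> norm (x k - y)})}"
    using order_trans by blast
qed

lemma closed_I_st_LIM_if_down_closed:
  assumes down_closed: "\<forall>A\<in>I. \<forall>B. B \<subseteq> A \<longrightarrow> B \<in> I"
  shows "closed (I_st_LIM I r x)"
  unfolding closure_subset_eq[symmetric]
proof
  fix \<xi> assume "\<xi> \<in> closure (I_st_LIM I r x)"
  then have approx: "\<forall>e>0. \<exists>y\<in>I_st_LIM I r x. dist y \<xi> < e"
    by (simp add: closure_approachable)
  have "r_I_stat_conv I r x \<xi>"
    unfolding r_I_stat_conv_def
  proof (intro allI impI)
    fix \<epsilon> \<delta> :: real assume "\<epsilon> > 0" "\<delta> > 0"
    then obtain y where "r_I_stat_conv I r x y" "norm (y - \<xi>) \<le> \<epsilon> / 2"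
      using approx unfolding I_st_LIM_def dist_norm
      by (metis half_gt_zero less_eq_real_def mem_Collect_eq)
    then show "{n. (1 / real n) * real (card {k \<in> {1..n}. norm (x k - \<xi>) \<ge> r + \<epsilon>}) \<ge> \<delta>} \<in> I"
      using r_I_stat_conv_near[OF down_closed, of r x y \<xi> "\<epsilon> / 2" \<epsilon> \<delta>] \<open>\<epsilon> > 0\<close> \<open>\<delta> > 0\<close>
      by simp
  qed
  then show "\<xi> \<in> I_st_LIM I r x" unfolding I_st_LIM_def by simp
qed

theorem theorem3p3:
  fixes I :: "nat set set" and x :: "nat \<Rightarrow> 'a::real_normed_vector" and r :: real
  assumes "is_ideal I" and "nontrivial_ideal I" and "admissible_ideal I"
    and "r > 0"
  shows "closed (I_st_LIM I r x)"
  using assms(1) unfolding is_ideal_def by (intro closed_I_st_LIM_if_down_closed) blast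

end
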